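(* The modified $\alpha$-pass algorithm cannot provide an approximation bound better than $\frac23$ for the clique inference problem with linear majority clique potentials, even when $W$ is diagonally dominant (each diagonal entry $w_{vv}$ is the largest entry of its row) and all rows of $W$ have equal sums: for every $\varepsilon>0$ there is such an instance (with nonnegative vertex potentials) on which the score of the assignment returned by modified $\alpha$-pass is at most $(\frac23+\varepsilon)$ times the optimal score.
   Context: Clique inference problem: there are $n$ vertices $1,\dots,n$, a finite set $V$ of values, real vertex potentials $\psi_{iv}$, and a clique potential $C$ depending only on the counts $n_v(\mathbf{v})=|\{i:v_i=v\}|$; the objective is $F(\mathbf{v})=\sum_i\psi_{iv_i}+C(\mathbf{v})$ over $\mathbf{v}\in V^n$. Linear majority potential: given a real $|V|\times|V|$ matrix $W=(w_{vv'})$, $C(\mathbf{v})=\sum_{v\in V}w_{av}n_v(\mathbf{v})$ where $a=\arg\max_v n_v(\mathbf{v})$ is the majority value. Modified $\alpha$-pass: for each $\alpha\in V$, sort vertices in decreasing order of $\psi_{i\alpha}+w_{\alpha\alpha}-\max_{v\ne\alpha}(\psi_{iv}+w_{\alpha v})$; for each $k\in\{1,\dots,n\}$ assign the top $k$ vertices $\alpha$ and every other vertex a value $v\neq\alpha$ maximizing $\psi_{iv}+w_{\alpha v}$; discard candidates whose majority value is not $\alpha$; output the remaining candidate with the largest $F$ over all $\alpha,k$. *)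

theory Defs
  imports Complex_Main
begin

(* Vertices are 0..<n, values are 0..<m. An assignment is x :: nat => nat with
   x i < m for i < n and (canonically) x i = 0 for i >= n. *)

definition assignments :: "nat \<Rightarrow> nat \<Rightarrow> (nat \<Rightarrow> nat) set" where
  "assignments n m = {x. (\<forall>i<n. x i < m) \<and> (\<forall>i. n \<le> i \<longrightarrow> x i = 0)}"

definition cnt :: "nat \<Rightarrow> (nat \<Rightarrow> nat) \<Rightarrow> nat \<Rightarrow> nat" where
  "cnt n x v = card {i. i < n \<and> x i = v}"

(* majority value; ties broken towards the smallest value *)
definition maj :: "nat \<Rightarrow> nat \<Rightarrow> (nat \<Rightarrow> nat) \<Rightarrow> nat" where
  "maj n m x = (LEAST v. v < m \<and> (\<forall>u<m. cnt n x u \<le> cnt n x v))"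

definition clique_pot :: "nat \<Rightarrow> nat \<Rightarrow> (nat \<Rightarrow> nat \<Rightarrow> real) \<Rightarrow> (nat \<Rightarrow> nat) \<Rightarrow> real" where
  "clique_pot n m w x = (\<Sum>v<m. w (maj n m x) v * real (cnt n x v))"

definition score :: "nat \<Rightarrow> nat \<Rightarrow> (nat \<Rightarrow> nat \<Rightarrow> real) \<Rightarrow> (nat \<Rightarrow> nat \<Rightarrow> real)
                      \<Rightarrow> (nat \<Rightarrow> nat) \<Rightarrow> real" where
  "score n m psi w x = (\<Sum>i<n. psi i (x i)) + clique_pot n m w x"

definition opt_score :: "nat \<Rightarrow> nat \<Rightarrow> (nat \<Rightarrow> nat \<Rightarrow> real) \<Rightarrow> (nat \<Rightarrow> nat \<Rightarrow> real) \<Rightarrow> real" where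
  "opt_score n m psi w = Max (score n m psi w ` assignments n m)"

(* sort key of vertex i in the alpha-pass for value a *)
definition akey :: "nat \<Rightarrow> (nat \<Rightarrow> nat \<Rightarrow> real) \<Rightarrow> (nat \<Rightarrow> nat \<Rightarrow> real) \<Rightarrow> nat \<Rightarrow> nat \<Rightarrow> real" where
  "akey m psi w a i = psi i a + w a a - Max {psi i v + w a v | v. v < m \<and> v \<noteq> a}"

(* x is a candidate produced by the modified alpha-pass for value a and prefix length k,
   for some admissible tie-breaking (sorting order sigma, choice among maximizers) *)
definition candidate :: "nat \<Rightarrow> nat \<Rightarrow> (nat \<Rightarrow> nat \<Rightarrow> real) \<Rightarrow> (nat \<Rightarrow> nat \<Rightarrow> real)
                          \<Rightarrow> nat \<Rightarrow> nat \<Rightarrow> (nat \<Rightarrow> nat) \<Rightarrow> bool" where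
  "candidate n m psi w a k x \<longleftrightarrow> a < m \<and> 1 \<le> k \<and> k \<le> n \<and>
     (\<forall>i. n \<le> i \<longrightarrow> x i = 0) \<and>
     (\<exists>\<sigma>. bij_betw \<sigma> {..<n} {..<n} \<and>
        (\<forall>i j. i < j \<and> j < n \<longrightarrow> akey m psi w a (\<sigma> j) \<le> akey m psi w a (\<sigma> i)) \<and>
        (\<forall>i<k. x (\<sigma> i) = a) \<and>
        (\<forall>i. k \<le> i \<and> i < n \<longrightarrow>
           x (\<sigma> i) < m \<and> x (\<sigma> i) \<noteq> a \<and>
           (\<forall>v<m. v \<noteq> a \<longrightarrow> psi (\<sigma> i) v + w a v \<le> psi (\<sigma> i) (x (\<sigma> i)) + w a (x (\<sigma> i)))))"

definition kept :: "nat \<Rightarrow> nat \<Rightarrow> (nat \<Rightarrow> nat \<Rightarrow> real) \<Rightarrow> (nat \<Rightarrow> nat \<Rightarrow> real)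
                     \<Rightarrow> (nat \<Rightarrow> nat) \<Rightarrow> bool" where
  "kept n m psi w x \<longleftrightarrow> (\<exists>a k. candidate n m psi w a k x \<and> maj n m x = a)"

definition alpha_pass_output :: "nat \<Rightarrow> nat \<Rightarrow> (nat \<Rightarrow> nat \<Rightarrow> real) \<Rightarrow> (nat \<Rightarrow> nat \<Rightarrow> real)
                     \<Rightarrow> (nat \<Rightarrow> nat) \<Rightarrow> bool" where
  "alpha_pass_output n m psi w x \<longleftrightarrow> kept n m psi w x \<and>
     (\<forall>y. kept n m psi w y \<longrightarrow> score n m psi w y \<le> score n m psi w x)"

end

theory Submission
  imports Defs
begin

text \<open>Three vertices and four values. Vertex 0 is indifferent; vertices 1 and 2 prefer value 1
  (potential 3) to value 2 (potential 2). The row of \<open>W\<close> for value 0 vanishes except for a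
  penalty on the unused value 3, every other row is constant, so all rows sum to \<open>-12\<close>. The
  assignment \<open>(0,1,2)\<close> has a three-way tie, hence majority 0 and score 5. In the pass for
  \<open>\<alpha> = 0\<close> both preferring vertices receive only 0 or 1, and they cannot both receive 1 without
  making 1 the majority, so the score is at most 3; every other majority value costs 3 per
  vertex. Thus the output scores at most \<open>3/5\<close> of the optimum.\<close>

lemma cnt_eq_sum: "cnt n x v = (\<Sum>i<n. if x i = v then 1 else 0)"
proof -
  have "cnt n x v = card {i \<in> {..<n}. x i = v}"
    unfolding cnt_def by (rule arg_cong[of _ _ card]) auto
  also have "\<dots> = (\<Sum>i\<in>{i \<in> {..<n}. x i = v}. 1)"
    by (rule card_eq_sum)
  also have "\<dots> = (\<Sum>i<n. if x i = v then 1 else 0)"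
    by (rule sum.inter_filter) simp
  finally show ?thesis .
qed

lemma sum_cnt:
  assumes "\<forall>i<n. x i < m"
  shows "(\<Sum>v<m. cnt n x v) = n"
proof -
  have "(\<Sum>v<m. cnt n x v) = (\<Sum>i<n. \<Sum>v<m. if x i = v then 1 else 0)"
    unfolding cnt_eq_sum by (rule sum.swap)
  also have "\<dots> = (\<Sum>i<n. 1)"
    using assms by (intro sum.cong) (auto simp: sum.delta)
  finally show ?thesis by simp
qed

lemma maj_is_max:
  assumes "0 < m"
  shows "maj n m x < m" and "\<forall>u<m. cnt n x u \<le> cnt n x (maj n m x)"
proof -
  have "\<exists>v. v < m \<and> (\<forall>u<m. cnt n x u \<le> cnt n x v)"
  proof -
    have "Max (cnt n x ` {..<m}) \<in> cnt n x ` {..<m}"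
      using assms by (intro Max_in) auto
    then obtain v where "v \<in> {..<m}" "cnt n x v = Max (cnt n x ` {..<m})" by auto
    then show ?thesis by (metis Max_ge finite_imageI finite_lessThan image_eqI lessThan_iff)
  qed
  then have "maj n m x < m \<and> (\<forall>u<m. cnt n x u \<le> cnt n x (maj n m x))"
    unfolding maj_def by (rule LeastI_ex)
  then show "maj n m x < m" and "\<forall>u<m. cnt n x u \<le> cnt n x (maj n m x)" by auto
qed

lemma clique_pot_const_row:
  assumes "\<forall>v<m. w (maj n m x) v = c" and "\<forall>i<n. x i < m"
  shows "clique_pot n m w x = c * real n"
proof -
  have "clique_pot n m w x = c * real (\<Sum>v<m. cnt n x v)"
    unfolding clique_pot_def using assms(1) by (simp add: sum_distrib_left)
  then show ?thesis using sum_cnt[OF assms(2)] by simp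
qed

lemma finite_assignments: "finite (assignments n m)"
proof -
  let ?tuple = "\<lambda>x. map x [0..<n]"
  have "inj_on ?tuple (assignments n m)"
  proof (rule inj_onI, rule ext)
    fix x y i
    assume "x \<in> assignments n m" "y \<in> assignments n m" "?tuple x = ?tuple y"
    then show "x i = y i"
      by (cases "i < n") (auto simp: assignments_def map_eq_conv)
  qed
  moreover have "?tuple ` assignments n m \<subseteq> {xs. set xs \<subseteq> {..<m} \<and> length xs = n}"
    by (auto simp: assignments_def)
  then have "finite (?tuple ` assignments n m)"
    by (rule finite_subset) (simp add: finite_lists_length_eq)
  ultimately show ?thesis using finite_imageD by blast
qed

lemma score_le_opt_score:
  "x \<in> assignments n m \<Longrightarrow> score n m psi w x \<le> opt_score n m psi w"
  unfolding opt_score_def by (rule Max_ge) (auto simp: finite_assignments)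

lemma candidate_value:
  assumes "candidate n m psi w a k x" and "i < n"
  shows "x i = a \<or> x i < m \<and> x i \<noteq> a \<and>
           (\<forall>v<m. v \<noteq> a \<longrightarrow> psi i v + w a v \<le> psi i (x i) + w a (x i))"
proof -
  obtain \<sigma> where bij: "bij_betw \<sigma> {..<n} {..<n}"
    and prefix: "\<forall>j<k. x (\<sigma> j) = a"
    and suffix: "\<forall>j. k \<le> j \<and> j < n \<longrightarrow> x (\<sigma> j) < m \<and> x (\<sigma> j) \<noteq> a \<and>
           (\<forall>v<m. v \<noteq> a \<longrightarrow> psi (\<sigma> j) v + w a v \<le> psi (\<sigma> j) (x (\<sigma> j)) + w a (x (\<sigma> j)))"
    using assms(1) unfolding candidate_def by blast
  obtain j where "j < n" "\<sigma> j = i"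
    using bij assms(2) by (metis bij_betw_imp_surj_on imageE lessThan_iff)
  then show ?thesis using prefix suffix by (cases "j < k") auto
qed

lemma candidate_less:
  assumes "candidate n m psi w a k x" and "i < n"
  shows "x i < m"
  using candidate_value[OF assms] assms(1) unfolding candidate_def by auto

definition psi_ex :: "nat \<Rightarrow> nat \<Rightarrow> real" where
  "psi_ex i v = (if i = 0 then 0 else if v = 1 then 3 else if v = 2 then 2 else 0)"

definition w_ex :: "nat \<Rightarrow> nat \<Rightarrow> real" where
  "w_ex a v = (if a = 0 then (if v = 3 then -12 else 0) else -3)"

lemma cnt_three:
  "cnt 3 x v = (if x 0 = v then 1 else 0) + (if x 1 = v then 1 else 0) + (if x 2 = v then 1 else 0)"
  by (simp add: cnt_eq_sum numeral_3_eq_3 numeral_2_eq_2)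

lemma sum_lessThan_four: "(\<Sum>v<4. f v) = f 0 + f 1 + f 2 + (f (3::nat) :: real)"
  by (simp add: numeral_eq_Suc add.commute add.left_commute)

lemma score_three:
  "score 3 4 psi_ex w_ex x = psi_ex 1 (x 1) + psi_ex 2 (x 2) + clique_pot 3 4 w_ex x"
  by (simp add: score_def numeral_eq_Suc psi_ex_def)

lemma candidate_zero_values:
  assumes "candidate 3 4 psi_ex w_ex 0 k x" and "i \<in> {1, 2}"
  shows "x i \<in> {0, 1}"
proof -
  have gain: "psi_ex i v + w_ex 0 v =
      (if v = 1 then 3 else if v = 2 then 2 else if v = 3 then -12 else 0)" for v
    using assms(2) by (auto simp: psi_ex_def w_ex_def)
  have "x i = 0 \<or> psi_ex i 1 + w_ex 0 1 \<le> psi_ex i (x i) + w_ex 0 (x i)"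
    using candidate_value[OF assms(1), of i] assms(2) by auto
  then show ?thesis unfolding gain by (auto split: if_splits)
qed

lemma kept_score_le_three:
  assumes "kept 3 4 psi_ex w_ex x"
  shows "score 3 4 psi_ex w_ex x \<le> 3"
proof -
  obtain a k where cand: "candidate 3 4 psi_ex w_ex a k x" and a: "maj 3 4 x = a"
    using assms unfolding kept_def by blast
  have psi_bounds: "0 \<le> psi_ex i v" "psi_ex i v \<le> 3" for i v by (auto simp: psi_ex_def)
  show ?thesis
  proof (cases "a = 0")
    case True
    have prefers: "x 1 \<in> {0, 1}" "x 2 \<in> {0, 1}"
      using candidate_zero_values[OF cand[unfolded True]] by auto
    have "cnt 3 x 1 \<le> cnt 3 x 0" using maj_is_max(2)[of 4 3 x] a True by auto
    then have "\<not> (x 1 = 1 \<and> x 2 = 1)" by (auto simp: cnt_three split: if_splits)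
    then have "psi_ex 1 (x 1) + psi_ex 2 (x 2) \<le> 3"
      using prefers by (auto simp: psi_ex_def)
    moreover have "clique_pot 3 4 w_ex x \<le> 0"
      using a True by (simp add: clique_pot_def sum_lessThan_four w_ex_def)
    ultimately show ?thesis by (simp add: score_three)
  next
    case False
    have "clique_pot 3 4 w_ex x = -3 * real 3"
      using a False candidate_less[OF cand]
      by (intro clique_pot_const_row) (auto simp: w_ex_def)
    then show ?thesis
      using psi_bounds[of 1 "x 1"] psi_bounds[of 2 "x 2"] by (simp add: score_three)
  qed
qed

lemma opt_score_ge_five: "5 \<le> opt_score 3 4 psi_ex w_ex"
proof -
  define y :: "nat \<Rightarrow> nat" where "y i = (if i \<le> 2 then i else 0)" for i
  have cnt_y: "cnt 3 y v = (if v \<le> 2 then 1 else 0)" for v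
    by (auto simp: cnt_three y_def)
  have "maj 3 4 y = 0"
    unfolding maj_def by (rule Least_equality) (auto simp: cnt_y)
  then have "score 3 4 psi_ex w_ex y = 5"
    by (simp add: score_three clique_pot_def sum_lessThan_four cnt_y psi_ex_def w_ex_def y_def)
  moreover have "y \<in> assignments 3 4" by (auto simp: assignments_def y_def)
  ultimately show ?thesis using score_le_opt_score by metis
qed

theorem theorem10:
  fixes \<epsilon> :: real
  assumes "\<epsilon> > 0"
  shows "\<exists>n m (psi :: nat \<Rightarrow> nat \<Rightarrow> real) (w :: nat \<Rightarrow> nat \<Rightarrow> real).
           1 \<le> n \<and> 2 \<le> m \<and>
           (\<forall>i<n. \<forall>v<m. 0 \<le> psi i v) \<and>
           (\<forall>v<m. \<forall>v'<m. w v v' \<le> w v v) \<and>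
           (\<exists>s. \<forall>v<m. (\<Sum>v'<m. w v v') = s) \<and>
           0 < opt_score n m psi w \<and>
           (\<forall>x. alpha_pass_output n m psi w x \<longrightarrow>
              score n m psi w x \<le> (2/3 + \<epsilon>) * opt_score n m psi w)"
proof (intro exI conjI)
  show "1 \<le> (3::nat)" "2 \<le> (4::nat)" by auto
  show "\<forall>i<3. \<forall>v<4. 0 \<le> psi_ex i v" by (auto simp: psi_ex_def)
  show "\<forall>v<4. \<forall>v'<4. w_ex v v' \<le> w_ex v v" by (auto simp: w_ex_def)
  show "\<forall>v<4. (\<Sum>v'<4. w_ex v v') = -12" by (auto simp: w_ex_def sum_lessThan_four)
  show "0 < opt_score 3 4 psi_ex w_ex" using opt_score_ge_five by linarith
  show "\<forall>x. alpha_pass_output 3 4 psi_ex w_ex x \<longrightarrow>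
          score 3 4 psi_ex w_ex x \<le> (2/3 + \<epsilon>) * opt_score 3 4 psi_ex w_ex"
  proof (intro allI impI)
    fix x assume "alpha_pass_output 3 4 psi_ex w_ex x"
    then have "score 3 4 psi_ex w_ex x \<le> 3"
      using kept_score_le_three unfolding alpha_pass_output_def by blast
    also have "\<dots> \<le> (2/3 + \<epsilon>) * 5" using assms by simp
    also have "\<dots> \<le> (2/3 + \<epsilon>) * opt_score 3 4 psi_ex w_ex"
      using opt_score_ge_five assms by (intro mult_left_mono) auto
    finally show "score 3 4 psi_ex w_ex x \<le> (2/3 + \<epsilon>) * opt_score 3 4 psi_ex w_ex" .
  qed
qed

end
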